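(* Let $\eta=4\times10^{-6}$. Then \[ \mathcal{N}\supset\Delta_1=\{(\gamma,\lambda)\in(0,1)^2: |\gamma-2^{-1/2}|<\eta,\ |\lambda-2^{-1/2}|<\eta\}, \] \[ \mathcal{M}\supset\Delta_2=\{\lambda\in\mathbb{D}: |\lambda-2^{-1/2}|<3\eta/4\}, \] \[ \mathcal{O}\supset\Delta_3=\{\lambda\in(0,1): |\lambda-2^{-1/2}|<\eta\}. \]
   Context: Let $\mathcal{B}=\{1+\sum_{n=1}^\infty a_n x^n : a_n\in\{-1,0,1\}\}$ (power series converging on the open unit disk $\mathbb{D}\subset\mathbb{C}$). Define $\mathcal{M}=\{z\in\mathbb{D}: \exists f\in\mathcal{B},\ f(z)=0\}$, $\mathcal{N}=\{(\gamma,\lambda)\in(-1,1)^2: \exists f\in\mathcal{B},\ f(\gamma)=f(\lambda)=0\}$, $\mathcal{O}=\{\lambda\in(-1,1): \exists f\in\mathcal{B},\ f(\lambda)=f'(\lambda)=0\}$. *)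

theory Defs
  imports "HOL-Analysis.Analysis"
begin

definition coeffsB :: "(nat \<Rightarrow> int) set" where
  "coeffsB = {a. a 0 = 1 \<and> (\<forall>n. a n \<in> {-1, 0, 1})}"

definition bser :: "(nat \<Rightarrow> int) \<Rightarrow> 'a::{real_normed_field,banach} \<Rightarrow> 'a" where
  "bser a z = (\<Sum>n. of_int (a n) * z ^ n)"

definition setM :: "complex set" where
  "setM = {z. norm z < 1 \<and> (\<exists>a\<in>coeffsB. bser a z = 0)}"

definition setN :: "(real \<times> real) set" where
  "setN = {(g, l). g \<in> {-1<..<1} \<and> l \<in> {-1<..<1} \<and>
             (\<exists>a\<in>coeffsB. bser a g = 0 \<and> bser a l = 0)}"

definition setO :: "real set" where
  "setO = {l. l \<in> {-1<..<1} \<and>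
             (\<exists>a\<in>coeffsB. bser a l = 0 \<and> deriv (bser a) l = 0)}"

end

theory Submission
  imports Defs
begin

(* Let T be a linear map of the plane with T\<^sup>n v \<longrightarrow> 0 for all v, let S be its inverse and e = (1, 0).
   If a bounded set K satisfies K \<subseteq> \<Union>d\<in>{-1,0,1}. (d e + T K), then starting from x \<in> K and
   repeatedly choosing a digit d with S (x - d e) \<in> K expands x = \<Sum> d\<^sub>n T\<^sup>n e. If moreover
   S (-e) \<in> K, applying T to the expansion of S (-e) gives \<Sum> a\<^sub>n T\<^sup>n e = 0 with a\<^sub>0 = 1 and
   a\<^sub>n \<in> {-1,0,1}. Linear functionals turn this vector identity into the required zeros:
   for T (x, y) = (g x, x + l y) the eigenfunctionals x and x + (l - g) y give a common zero
   at g and l, and for g = l the coordinate y gives a zero of the derivative; for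
   T (x, y) = (s x - t\<^sup>2 y, x + s y) the functional x + i t y conjugates T to multiplication
   by s + i t. A single finite union of rectangles K, checked by integer interval arithmetic,
   serves simultaneously for all these maps whose parameters lie close enough to 1/sqrt 2. *)

section \<open>Digit expansions from a self-covering set\<close>

lemma linear_funpow:
  fixes T :: "'a::real_vector \<Rightarrow> 'a"
  assumes "linear T"
  shows "linear (T ^^ n)"
proof (induction n)
  case 0
  show ?case by (simp add: linear_ident)
next
  case (Suc n)
  show ?case
    unfolding funpow.simps(2) by (rule linear_compose[OF Suc.IH assms])
qed

lemma linear_funpow_bounded_tendsto_zero:
  fixes T :: "'a::euclidean_space \<Rightarrow> 'a"
  assumes lin: "linear T" and decay: "\<And>v. (\<lambda>n. (T ^^ n) v) \<longlonglongrightarrow> 0"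
    and bdd: "bounded (range z)"
  shows "(\<lambda>n. (T ^^ n) (z n)) \<longlonglongrightarrow> 0"
proof -
  have "(T ^^ n) (z n) = (\<Sum>i\<in>Basis. (z n \<bullet> i) *\<^sub>R (T ^^ n) i)" for n
  proof -
    have "(T ^^ n) (z n) = (T ^^ n) (\<Sum>i\<in>Basis. (z n \<bullet> i) *\<^sub>R i)"
      by (simp add: euclidean_representation)
    also have "\<dots> = (\<Sum>i\<in>Basis. (z n \<bullet> i) *\<^sub>R (T ^^ n) i)"
      using linear_funpow[OF lin] by (simp add: linear_sum linear_scale)
    finally show ?thesis .
  qed
  moreover have "(\<lambda>n. (z n \<bullet> i) *\<^sub>R (T ^^ n) i) \<longlonglongrightarrow> 0" if "i \<in> Basis" for i
  proof -
    obtain B where "\<And>n. norm (z n) \<le> B"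
      using bdd by (auto simp: bounded_iff)
    then have "Bfun (\<lambda>n. z n \<bullet> i) sequentially"
      using Basis_le_norm[OF that] by (intro BfunI always_eventually) (auto intro: order_trans)
    then show ?thesis
      using bounded_bilinear.Bfun_prod_Zfun[OF bounded_bilinear_scaleR] decay[of i]
      by (simp add: tendsto_Zfun_iff)
  qed
  then have "(\<lambda>n. \<Sum>i\<in>Basis. (z n \<bullet> i) *\<^sub>R (T ^^ n) i) \<longlonglongrightarrow> 0"
    using tendsto_sum[of Basis "\<lambda>i n. (z n \<bullet> i) *\<^sub>R (T ^^ n) i" "\<lambda>_. 0"] by simp
  ultimately show ?thesis by simp
qed

lemma self_cover_expansion:
  fixes T S :: "'a::euclidean_space \<Rightarrow> 'a" and D :: "int set"
  assumes lin: "linear T" and right_inverse: "\<And>v. T (S v) = v"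
    and decay: "\<And>v. (\<lambda>n. (T ^^ n) v) \<longlonglongrightarrow> 0"
    and bdd: "bounded K"
    and cover: "\<And>v. v \<in> K \<Longrightarrow> \<exists>d\<in>D. S (v - of_int d *\<^sub>R e) \<in> K"
    and "x \<in> K"
  shows "\<exists>d. (\<forall>n. d n \<in> D) \<and> (\<lambda>n. of_int (d n) *\<^sub>R (T ^^ n) e) sums x"
proof -
  obtain digit where digit: "\<And>v. v \<in> K \<Longrightarrow> digit v \<in> D \<and> S (v - of_int (digit v) *\<^sub>R e) \<in> K"
    using cover by metis
  define z where "z = rec_nat x (\<lambda>_ v. S (v - of_int (digit v) *\<^sub>R e))"
  define d where "d n = digit (z n)" for n
  have z_Suc: "z (Suc n) = S (z n - of_int (d n) *\<^sub>R e)" for n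
    by (simp add: z_def d_def)
  have zK: "z n \<in> K" for n
    by (induction n) (use \<open>x \<in> K\<close> digit in \<open>simp_all add: z_def\<close>)
  have partial: "x = (\<Sum>k<n. of_int (d k) *\<^sub>R (T ^^ k) e) + (T ^^ n) (z n)" for n
  proof (induction n)
    case 0
    then show ?case by (simp add: z_def)
  next
    case (Suc n)
    have "z n = of_int (d n) *\<^sub>R e + T (z (Suc n))"
      by (simp add: z_Suc right_inverse)
    then have "(T ^^ n) (z n) = of_int (d n) *\<^sub>R (T ^^ n) e + (T ^^ Suc n) (z (Suc n))"
      using linear_funpow[OF lin, of n] by (simp add: linear_add linear_scale funpow_swap1)
    with Suc.IH show ?case by simp
  qed
  have "(\<lambda>n. (T ^^ n) (z n)) \<longlonglongrightarrow> 0"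
    using zK by (intro linear_funpow_bounded_tendsto_zero[OF lin decay] bounded_subset[OF bdd]) auto
  then have "(\<lambda>n. x - (T ^^ n) (z n)) \<longlonglongrightarrow> x"
    using tendsto_diff[OF tendsto_const] by fastforce
  moreover have "x - (T ^^ n) (z n) = (\<Sum>k<n. of_int (d k) *\<^sub>R (T ^^ k) e)" for n
    using partial[of n] by (simp add: algebra_simps)
  ultimately have "(\<lambda>n. of_int (d n) *\<^sub>R (T ^^ n) e) sums x"
    by (simp add: sums_def)
  moreover have "d n \<in> D" for n
    using digit zK by (simp add: d_def)
  ultimately show ?thesis by blast
qed

lemma self_cover_zero_expansion:
  fixes T S :: "'a::euclidean_space \<Rightarrow> 'a"
  assumes lin: "linear T" and right_inverse: "\<And>v. T (S v) = v"
    and decay: "\<And>v. (\<lambda>n. (T ^^ n) v) \<longlonglongrightarrow> 0"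
    and bdd: "bounded K"
    and cover: "\<And>v. v \<in> K \<Longrightarrow> \<exists>d\<in>{-1, 0, 1}. S (v - of_int d *\<^sub>R e) \<in> K"
    and target: "S (- e) \<in> K"
  shows "\<exists>a\<in>coeffsB. (\<lambda>n. of_int (a n) *\<^sub>R (T ^^ n) e) sums 0"
proof -
  obtain d where d: "\<forall>n. d n \<in> {-1, 0, 1}" "(\<lambda>n. of_int (d n) *\<^sub>R (T ^^ n) e) sums S (- e)"
    using self_cover_expansion[OF lin right_inverse decay bdd cover target] by blast
  define a where "a n = (if n = 0 then 1 else d (n - 1))" for n
  have "(\<lambda>n. T (of_int (d n) *\<^sub>R (T ^^ n) e)) sums T (S (- e))"
    using d(2) by (rule bounded_linear.sums[OF linear_conv_bounded_linear[THEN iffD1, OF lin]])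
  then have "(\<lambda>n. of_int (a (Suc n)) *\<^sub>R (T ^^ Suc n) e) sums (- e)"
    using linear_scale[OF lin] by (simp add: a_def right_inverse funpow_Suc_right)
  then have "(\<lambda>n. of_int (a n) *\<^sub>R (T ^^ n) e) sums 0"
    by (subst (asm) sums_Suc_iff) (simp add: a_def)
  moreover have "a \<in> coeffsB"
    using d(1) by (simp add: coeffsB_def a_def)
  ultimately show ?thesis by blast
qed

section \<open>Reading off zeros\<close>

lemma bser_eqI: "(\<lambda>n. of_int (a n) * z ^ n) sums s \<Longrightarrow> bser a z = s"
  by (simp add: bser_def sums_iff)

lemma eigenfunctional_bser_zero:
  fixes \<psi> :: "'a::real_normed_vector \<Rightarrow> 'b::{real_normed_field,banach}"
  assumes "bounded_linear \<psi>" and eigen: "\<And>v. \<psi> (T v) = c * \<psi> v" and "\<psi> e = 1"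
    and "(\<lambda>n. of_int (a n) *\<^sub>R (T ^^ n) e) sums 0"
  shows "bser a c = 0"
proof -
  have lin: "linear \<psi>"
    using assms(1) by (rule bounded_linear.linear)
  have "\<psi> ((T ^^ n) e) = c ^ n" for n
    by (induction n) (simp_all add: eigen \<open>\<psi> e = 1\<close>)
  then have "(\<lambda>n. of_int (a n) * c ^ n) sums \<psi> 0"
    using bounded_linear.sums[OF assms(1) assms(4)]
    by (simp add: linear_scale[OF lin] scaleR_conv_of_real)
  then show ?thesis
    by (simp add: linear_0[OF lin] bser_eqI)
qed

lemma bser_deriv_sums:
  fixes x :: "'a::{real_normed_field,banach}"
  assumes "a \<in> coeffsB" "norm x < 1"
  shows "(\<lambda>n. of_nat n * of_int (a n) * x ^ (n - 1)) sums deriv (bser a) x"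
proof -
  have summable: "summable (\<lambda>n. of_int (a n) * z ^ n)" if "norm z < 1" for z :: 'a
  proof (rule summable_comparison_test[OF _ summable_geometric[of "norm z"]])
    have "norm (of_int (a n) * z ^ n) \<le> norm z ^ n" for n
    proof -
      have "\<bar>real_of_int (a n)\<bar> \<le> 1"
        using assms(1) unfolding coeffsB_def by (auto dest: spec[of _ n])
      then show ?thesis
        by (simp add: norm_mult norm_power mult_left_le_one_le)
    qed
    then show "\<exists>N. \<forall>n\<ge>N. norm (of_int (a n) * z ^ n) \<le> norm z ^ n"
      by blast
  qed (use that in simp)
  then have D: "(bser a has_field_derivative (\<Sum>n. diffs (\<lambda>n. of_int (a n)) n * x ^ n)) (at x)"
    unfolding bser_def[abs_def] using assms(2) by (intro termdiffs_strong') auto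
  have "summable (\<lambda>n. diffs (\<lambda>n. of_int (a n)) n * x ^ n)"
    using assms(2) summable by (rule termdiff_converges)
  then show ?thesis
    using diffs_equiv DERIV_imp_deriv[OF D] by simp
qed

section \<open>Two families of linear maps of the plane\<close>

definition tri_map :: "real \<Rightarrow> real \<Rightarrow> real \<times> real \<Rightarrow> real \<times> real" where
  "tri_map g l = (\<lambda>(x, y). (g * x, x + l * y))"

lemma linear_tri_map: "linear (tri_map g l)"
  by (rule linearI) (auto simp: tri_map_def algebra_simps)

lemma tri_map_iterate:
  "(tri_map g l ^^ n) (x, y) = (g ^ n * x, (\<Sum>i<n. g ^ i * l ^ (n - 1 - i)) * x + l ^ n * y)"
proof (induction n)
  case 0
  then show ?case by simp
next
  case (Suc n)
  have "(\<Sum>i<n. g ^ i * l ^ (n - i)) = l * (\<Sum>i<n. g ^ i * l ^ (n - 1 - i))"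
    unfolding sum_distrib_left
    by (rule sum.cong) (simp_all add: Suc_diff_Suc mult.left_commute flip: power_Suc)
  then have "(\<Sum>i<Suc n. g ^ i * l ^ (Suc n - 1 - i)) = g ^ n + l * (\<Sum>i<n. g ^ i * l ^ (n - 1 - i))"
    by simp
  then show ?case
    using Suc by (simp add: tri_map_def algebra_simps)
qed

lemma tri_map_iterates_tendsto_zero:
  assumes "\<bar>g\<bar> < 1" "\<bar>l\<bar> < 1"
  shows "(\<lambda>n. (tri_map g l ^^ n) v) \<longlonglongrightarrow> 0"
proof -
  define m where "m = max \<bar>g\<bar> \<bar>l\<bar>"
  have m: "0 \<le> m" "m < 1" "\<bar>g\<bar> \<le> m" "\<bar>l\<bar> \<le> m"
    using assms by (auto simp: m_def)
  define h where "h n = (\<Sum>i<n. g ^ i * l ^ (n - 1 - i))" for n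
  have "norm (h (Suc n)) \<le> of_nat (Suc n) * m ^ n" for n
  proof -
    have "norm (h (Suc n)) \<le> (\<Sum>i<Suc n. \<bar>g\<bar> ^ i * \<bar>l\<bar> ^ (n - i))"
      unfolding h_def real_norm_def by (rule order_trans[OF sum_abs]) (simp add: abs_mult power_abs)
    also have "\<dots> \<le> (\<Sum>i<Suc n. m ^ i * m ^ (n - i))"
      using m by (intro sum_mono mult_mono power_mono) auto
    also have "\<dots> = of_nat (Suc n) * m ^ n"
      by (simp flip: power_add)
    finally show ?thesis .
  qed
  moreover have "(\<lambda>n. of_nat (Suc n) * m ^ n) \<longlonglongrightarrow> 0"
    using powser_times_n_limit_0[of m] LIMSEQ_power_zero[of m] m
    by (simp add: distrib_right tendsto_add_zero)
  ultimately have "(\<lambda>n. h (Suc n)) \<longlonglongrightarrow> 0"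
    by (rule Lim_null_comparison[OF always_eventually[OF allI]])
  then have "h \<longlonglongrightarrow> 0"
    by (rule LIMSEQ_imp_Suc)
  obtain x y where v: "v = (x, y)"
    by fastforce
  have "(\<lambda>n. (g ^ n * x, h n * x + l ^ n * y)) \<longlonglongrightarrow> (0 * x, 0 * x + 0 * y)"
    using \<open>h \<longlonglongrightarrow> 0\<close> assms by (intro tendsto_intros LIMSEQ_power_zero) simp_all
  then show ?thesis
    by (simp add: v tri_map_iterate h_def zero_prod_def)
qed

lemma tri_expansion_zeros:
  assumes "(\<lambda>n. of_int (a n) *\<^sub>R (tri_map g l ^^ n) (1, 0)) sums 0"
  shows "bser a g = 0" "bser a l = 0"
proof -
  show "bser a g = 0"
    by (rule eigenfunctional_bser_zero[OF bounded_linear_fst _ _ assms]) (auto simp: tri_map_def)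
  show "bser a l = 0"
  proof (rule eigenfunctional_bser_zero[OF _ _ _ assms])
    show "bounded_linear (\<lambda>(x, y). x + (l - g) * y)"
      unfolding linear_conv_bounded_linear[symmetric]
      by (rule linearI) (auto simp: algebra_simps)
  qed (auto simp: tri_map_def algebra_simps)
qed

lemma tri_expansion_deriv_zero:
  assumes "a \<in> coeffsB" "\<bar>l\<bar> < 1"
    and "(\<lambda>n. of_int (a n) *\<^sub>R (tri_map l l ^^ n) (1, 0)) sums 0"
  shows "deriv (bser a) l = 0"
proof -
  have "snd ((tri_map l l ^^ n) (1, 0)) = of_nat n * l ^ (n - 1)" for n
  proof -
    have "(\<Sum>i<n. l ^ i * l ^ (n - 1 - i)) = (\<Sum>i<n. l ^ (n - 1))"
      by (rule sum.cong) (simp_all flip: power_add)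
    then show ?thesis
      by (simp add: tri_map_iterate)
  qed
  then have "(\<lambda>n. of_nat n * of_int (a n) * l ^ (n - 1)) sums 0"
    using bounded_linear.sums[OF bounded_linear_snd assms(3)] by (simp add: mult_ac)
  then show ?thesis
    using bser_deriv_sums[OF assms(1), of l] assms(2) sums_unique2 by force
qed

definition rot_map :: "real \<Rightarrow> real \<Rightarrow> real \<times> real \<Rightarrow> real \<times> real" where
  "rot_map s t = (\<lambda>(x, y). (s * x - t\<^sup>2 * y, x + s * y))"

definition rot_coord :: "real \<Rightarrow> real \<times> real \<Rightarrow> complex" where
  "rot_coord t = (\<lambda>(x, y). Complex x (t * y))"

lemma linear_rot_map: "linear (rot_map s t)"
  by (rule linearI) (auto simp: rot_map_def algebra_simps)

lemma bounded_linear_rot_coord: "bounded_linear (rot_coord t)"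
  unfolding linear_conv_bounded_linear[symmetric]
  by (rule linearI) (auto simp: rot_coord_def complex_eq_iff algebra_simps)

lemma rot_coord_rot_map: "rot_coord t (rot_map s t v) = Complex s t * rot_coord t v"
  by (cases v) (simp add: rot_coord_def rot_map_def complex_eq_iff power2_eq_square algebra_simps)

lemma rot_map_iterates_tendsto_zero:
  assumes "s\<^sup>2 + t\<^sup>2 < 1"
  shows "(\<lambda>n. (rot_map s t ^^ n) v) \<longlonglongrightarrow> 0"
proof (cases "t = 0")
  case True
  have "\<bar>s\<bar> < 1"
    using assms True by (simp add: abs_square_less_1)
  moreover have "rot_map s t = tri_map s s"
    using True by (auto simp: rot_map_def tri_map_def)
  ultimately show ?thesis
    using tri_map_iterates_tendsto_zero by simp
next
  case False
  let ?w = "\<lambda>n. rot_coord t ((rot_map s t ^^ n) v)"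
  have "?w n = Complex s t ^ n * rot_coord t v" for n
    by (induction n) (simp_all add: rot_coord_rot_map)
  moreover have "norm (Complex s t) < 1"
    using assms by (simp add: cmod_def)
  ultimately have "?w \<longlonglongrightarrow> 0"
    by (simp add: LIMSEQ_power_zero tendsto_mult_left_zero)
  then have "(\<lambda>n. (Re (?w n), Im (?w n) / t)) \<longlonglongrightarrow> (Re 0, Im 0 / t)"
    using False by (intro tendsto_intros)
  moreover have "(Re (?w n), Im (?w n) / t) = (rot_map s t ^^ n) v" for n
    using False by (cases "(rot_map s t ^^ n) v") (simp add: rot_coord_def)
  ultimately show ?thesis
    by (simp add: zero_prod_def)
qed

lemma rot_expansion_zero:
  assumes "(\<lambda>n. of_int (a n) *\<^sub>R (rot_map s t ^^ n) (1, 0)) sums 0"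
  shows "bser a (Complex s t) = 0"
  by (rule eigenfunctional_bser_zero[where \<psi> = "rot_coord t" and T = "rot_map s t",
        OF bounded_linear_rot_coord rot_coord_rot_map _ assms])
    (simp add: rot_coord_def complex_eq_iff)

section \<open>A verified covering certificate\<close>

type_synonym box = "int \<times> int \<times> int \<times> int"

definition box_union :: "box list \<Rightarrow> (real \<times> real) set" where
  "box_union bs = (\<Union>(a, c, l, h)\<in>set bs. {of_int a..of_int c} \<times> {of_int l..of_int h})"

fun strip_covered :: "box list \<Rightarrow> int \<Rightarrow> int \<Rightarrow> int \<Rightarrow> int \<Rightarrow> bool" where
  "strip_covered [] x1 x2 y1 y2 = False"
| "strip_covered ((a, c, l, h) # bs) x1 x2 y1 y2 =
     (if c < x1 then strip_covered bs x1 x2 y1 y2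
      else a \<le> x1 \<and> l \<le> y1 \<and> y2 \<le> h \<and> (x2 \<le> c \<or> strip_covered bs c x2 y1 y2))"

lemma strip_covered_sound:
  assumes "strip_covered bs x1 x2 y1 y2"
    and "of_int x1 \<le> x" "x \<le> of_int x2" "of_int y1 \<le> y" "y \<le> of_int y2"
  shows "(x, y) \<in> box_union bs"
  using assms(1,2,3)
proof (induction bs arbitrary: x1)
  case Nil
  then show ?case by simp
next
  case (Cons bx bs)
  obtain a c l h where bx: "bx = (a, c, l, h)"
    by (cases bx) auto
  consider "c < x1" | "\<not> c < x1" "x \<le> of_int c" | "\<not> c < x1" "of_int c < x"
    by linarith
  then show ?case
  proof cases
    case 1
    then have "(x, y) \<in> box_union bs"
      using Cons by (simp add: bx)
    then show ?thesis by (auto simp: box_union_def)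
  next
    case 2
    then show ?thesis
      using Cons.prems assms(4,5) by (force simp: bx box_union_def)
  next
    case 3
    then have "strip_covered bs c x2 y1 y2"
      using Cons.prems by (auto simp: bx)
    then have "(x, y) \<in> box_union bs"
      using Cons.IH[of c] Cons.prems(3) 3 by simp
    then show ?thesis by (auto simp: box_union_def)
  qed
qed

definition mul_lo :: "int \<Rightarrow> int \<Rightarrow> int \<Rightarrow> int" where
  "mul_lo lo hi x = (if 0 \<le> x then lo * x else hi * x)"

definition mul_hi :: "int \<Rightarrow> int \<Rightarrow> int \<Rightarrow> int" where
  "mul_hi lo hi x = (if 0 \<le> x then hi * x else lo * x)"

lemma mul_lo_le:
  fixes k y :: real
  assumes "0 \<le> lo" "k \<in> {of_int lo..of_int hi}" "of_int x \<le> y"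
  shows "of_int (mul_lo lo hi x) \<le> k * y"
proof -
  have k: "of_int lo \<le> k" "k \<le> of_int hi" "0 \<le> k"
    using assms(2) of_int_nonneg[OF assms(1), where 'a=real] by auto
  have "of_int (mul_lo lo hi x) \<le> k * of_int x"
    using mult_right_mono[OF k(1), of "of_int x"] mult_right_mono_neg[OF k(2), of "of_int x"]
    by (simp add: mul_lo_def)
  also have "\<dots> \<le> k * y"
    using assms(3) k(3) by (rule mult_left_mono)
  finally show ?thesis .
qed

lemma mul_hi_ge:
  fixes k y :: real
  assumes "0 \<le> lo" "k \<in> {of_int lo..of_int hi}" "y \<le> of_int x"
  shows "k * y \<le> of_int (mul_hi lo hi x)"
proof -
  have k: "of_int lo \<le> k" "k \<le> of_int hi" "0 \<le> k"
    using assms(2) of_int_nonneg[OF assms(1), where 'a=real] by auto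
  have "k * y \<le> k * of_int x"
    using assms(3) k(3) by (rule mult_left_mono)
  also have "\<dots> \<le> of_int (mul_hi lo hi x)"
    using mult_right_mono[OF k(2), of "of_int x"] mult_right_mono_neg[OF k(1), of "of_int x"]
    by (simp add: mul_hi_def)
  finally show ?thesis .
qed

(* Both tri_map and rot_map have inverses of this shape. *)
definition param_map :: "real \<Rightarrow> real \<Rightarrow> real \<Rightarrow> real \<Rightarrow> real \<times> real \<Rightarrow> real \<times> real" where
  "param_map \<alpha> \<beta> \<gamma> \<delta> = (\<lambda>(w, v). (\<alpha> * w + \<beta> * v, \<delta> * v - \<gamma> * w))"

definition param_box :: "real \<Rightarrow> real \<Rightarrow> real \<Rightarrow> real \<Rightarrow> bool" where
  "param_box \<alpha> \<beta> \<gamma> \<delta> \<longleftrightarrow>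
     4096 * \<alpha> \<in> {5792..5793} \<and> 4096 * \<delta> \<in> {5792..5793} \<and> 4096 * \<gamma> \<in> {8191..8193} \<and>
     524288 * \<beta> \<in> {0..1}"

(* The strip checked here encloses, in units of 1/65536, the image of [a/16, c/16] \<times> [p/16, q/16]
   under v \<mapsto> param_map (v - (b, 0)) for all parameters in param_box; the margins -1 and +1
   absorb the term \<beta> v, as long as \<bar>v\<bar> \<le> 8. *)
definition piece_ok :: "box list \<Rightarrow> int \<Rightarrow> int \<Rightarrow> int \<Rightarrow> int \<Rightarrow> int \<Rightarrow> bool" where
  "piece_ok bs a c p q b =
     strip_covered bs (mul_lo 5792 5793 (a - 16 * b) - 1) (mul_hi 5792 5793 (c - 16 * b) + 1)
       (mul_lo 5792 5793 p - mul_hi 8191 8193 (c - 16 * b))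
       (mul_hi 5792 5793 q - mul_lo 8191 8193 (a - 16 * b))"

lemma piece_ok_sound:
  assumes "piece_ok bs a c p q b" "param_box \<alpha> \<beta> \<gamma> \<delta>"
    and "of_int a \<le> 16 * u" "16 * u \<le> of_int c" "of_int p \<le> 16 * v" "16 * v \<le> of_int q"
    and "\<bar>v\<bar> \<le> 8"
  shows "65536 *\<^sub>R param_map \<alpha> \<beta> \<gamma> \<delta> (u - of_int b, v) \<in> box_union bs"
proof -
  let ?w = "16 * u - 16 * of_int b"
  have box: "4096 * \<alpha> \<in> {of_int 5792..of_int 5793}" "4096 * \<delta> \<in> {of_int 5792..of_int 5793}"
      "4096 * \<gamma> \<in> {of_int 8191..of_int 8193}" "524288 * \<beta> \<in> {0..1}"
    using assms(2) by (simp_all add: param_box_def)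
  have w: "of_int (a - 16 * b) \<le> ?w" "?w \<le> of_int (c - 16 * b)"
    using assms(3,4) by simp_all
  have small: "\<bar>65536 * \<beta> * v\<bar> \<le> 1"
  proof -
    have "\<bar>524288 * \<beta>\<bar> * \<bar>v\<bar> \<le> 1 * 8"
      using box(4) assms(7) by (intro mult_mono) auto
    then show ?thesis by (simp add: abs_mult)
  qed
  have x: "65536 * (\<alpha> * (u - of_int b) + \<beta> * v) = (4096 * \<alpha>) * ?w + 65536 * \<beta> * v"
    and y: "65536 * (\<delta> * v - \<gamma> * (u - of_int b)) = (4096 * \<delta>) * (16 * v) - (4096 * \<gamma>) * ?w"
    by (simp_all add: algebra_simps)
  have bounds: "of_int (mul_lo 5792 5793 (a - 16 * b)) \<le> (4096 * \<alpha>) * ?w"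
    "(4096 * \<alpha>) * ?w \<le> of_int (mul_hi 5792 5793 (c - 16 * b))"
    "of_int (mul_lo 5792 5793 p) \<le> (4096 * \<delta>) * (16 * v)"
    "(4096 * \<delta>) * (16 * v) \<le> of_int (mul_hi 5792 5793 q)"
    "of_int (mul_lo 8191 8193 (a - 16 * b)) \<le> (4096 * \<gamma>) * ?w"
    "(4096 * \<gamma>) * ?w \<le> of_int (mul_hi 8191 8193 (c - 16 * b))"
    using box w assms(5,6) by (intro mul_lo_le mul_hi_ge; simp)+
  have "(65536 * (\<alpha> * (u - of_int b) + \<beta> * v), 65536 * (\<delta> * v - \<gamma> * (u - of_int b)))
      \<in> box_union bs"
    using bounds small
    by (intro strip_covered_sound[OF assms(1)[unfolded piece_ok_def]])
      (simp only: x y of_int_add of_int_diff of_int_1 abs_le_iff; linarith)+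
  then show ?thesis
    by (simp add: param_map_def)
qed

(* A column (a, c, l, h, pieces) is the rectangle [a/16, c/16] \<times> [l/16, h/16]; its pieces (p, q, b)
   cover [l, h] and use the digit b where 16 v \<in> [p, q]. *)
type_synonym column = "int \<times> int \<times> int \<times> int \<times> (int \<times> int \<times> int) list"

fun interval_covered :: "int \<Rightarrow> int \<Rightarrow> (int \<times> int \<times> int) list \<Rightarrow> bool" where
  "interval_covered lo hi [] = False"
| "interval_covered lo hi ((p, q, b) # ps) = (p \<le> lo \<and> (hi \<le> q \<or> interval_covered q hi ps))"

lemma interval_covered_sound:
  fixes v :: real
  assumes "interval_covered lo hi ps" "of_int lo \<le> v" "v \<le> of_int hi"
  shows "\<exists>(p, q, b)\<in>set ps. of_int p \<le> v \<and> v \<le> of_int q"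
  using assms
proof (induction ps arbitrary: lo)
  case Nil
  then show ?case by simp
next
  case (Cons pc ps)
  obtain p q b where pc: "pc = (p, q, b)"
    by (cases pc) auto
  show ?case
  proof (cases "v \<le> of_int q")
    case True
    have "p \<le> lo"
      using Cons.prems(1) by (simp add: pc)
    then have "of_int p \<le> v"
      by (meson Cons.prems(2) of_int_le_iff order_trans)
    then show ?thesis
      using True by (auto simp: pc)
  next
    case False
    then have "interval_covered q hi ps"
      using Cons.prems by (auto simp: pc)
    then show ?thesis
      using Cons.IH[of q] Cons.prems(3) False by auto
  qed
qed

definition column_boxes :: "column list \<Rightarrow> box list" where
  "column_boxes cs = map (\<lambda>(a, c, l, h, _). (4096 * a, 4096 * c, 4096 * l, 4096 * h)) cs"

definition column_set :: "column list \<Rightarrow> (real \<times> real) set" where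
  "column_set cs = {z. 65536 *\<^sub>R z \<in> box_union (column_boxes cs)}"

definition column_ok :: "box list \<Rightarrow> column \<Rightarrow> bool" where
  "column_ok bs = (\<lambda>(a, c, l, h, ps). -128 \<le> l \<and> h \<le> 128 \<and> interval_covered l h ps \<and>
     list_all (\<lambda>(p, q, b). b \<in> {-1, 0, 1} \<and> piece_ok bs a c p q b) ps)"

(* The final strip contains 65536 (-\<alpha>, \<gamma>) = 65536 param_map \<alpha> \<beta> \<gamma> \<delta> (-1, 0) for all
   parameters in param_box. *)
definition certificate_ok :: "column list \<Rightarrow> bool" where
  "certificate_ok cs \<longleftrightarrow>
     list_all (column_ok (column_boxes cs)) cs \<and>
     strip_covered (column_boxes cs) (-92688) (-92672) 131056 131088"

lemma bounded_column_set: "bounded (column_set cs)"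
proof -
  have "bounded (box_union bs)" for bs
    by (auto simp: box_union_def intro!: bounded_Times)
  then obtain B where "\<And>z. z \<in> box_union (column_boxes cs) \<Longrightarrow> norm z \<le> B"
    by (meson bounded_iff)
  then have "norm z \<le> B / 65536" if "z \<in> column_set cs" for z
    using that by (fastforce simp: column_set_def)
  then show ?thesis
    unfolding bounded_iff by blast
qed

lemma certificate_ok_self_cover:
  assumes "certificate_ok cs" "param_box \<alpha> \<beta> \<gamma> \<delta>" "z \<in> column_set cs"
  shows "\<exists>b\<in>{-1, 0, 1}. param_map \<alpha> \<beta> \<gamma> \<delta> (z - of_int b *\<^sub>R (1, 0)) \<in> column_set cs"
proof -
  obtain u v where z: "z = (u, v)"
    by fastforce
  obtain a c l h ps where col: "(a, c, l, h, ps) \<in> set cs"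
      "of_int a \<le> 16 * u" "16 * u \<le> of_int c" "of_int l \<le> 16 * v" "16 * v \<le> of_int h"
    using assms(3) unfolding z column_set_def box_union_def column_boxes_def by auto
  have "column_ok (column_boxes cs) (a, c, l, h, ps)"
    using assms(1) col(1) by (simp add: certificate_ok_def list_all_iff)
  then have checks: "-128 \<le> l" "h \<le> 128" "interval_covered l h ps"
      "list_all (\<lambda>(p, q, b). b \<in> {-1, 0, 1} \<and> piece_ok (column_boxes cs) a c p q b) ps"
    by (simp_all add: column_ok_def)
  obtain p q b where pqb: "(p, q, b) \<in> set ps" "of_int p \<le> 16 * v" "16 * v \<le> of_int q"
    using interval_covered_sound[OF checks(3) col(4,5)] by blast
  have b: "b \<in> {-1, 0, 1}" "piece_ok (column_boxes cs) a c p q b"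
    using checks(4) pqb(1) unfolding list_all_iff by (fastforce dest: bspec)+
  have "\<bar>v\<bar> \<le> 8"
    using col(4,5) checks(1,2) by linarith
  then have "65536 *\<^sub>R param_map \<alpha> \<beta> \<gamma> \<delta> (u - of_int b, v) \<in> box_union (column_boxes cs)"
    using piece_ok_sound[OF b(2) assms(2) col(2,3) pqb(2,3)] by blast
  then have "param_map \<alpha> \<beta> \<gamma> \<delta> (z - of_int b *\<^sub>R (1, 0)) \<in> column_set cs"
    by (simp add: z column_set_def)
  then show ?thesis
    using b(1) by blast
qed

lemma certificate_ok_target:
  assumes "certificate_ok cs" "param_box \<alpha> \<beta> \<gamma> \<delta>"
  shows "param_map \<alpha> \<beta> \<gamma> \<delta> (- (1, 0)) \<in> column_set cs"
proof -
  have "strip_covered (column_boxes cs) (-92688) (-92672) 131056 131088"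
    using assms(1) by (simp add: certificate_ok_def)
  moreover have "of_int (- 92688) \<le> 65536 * - \<alpha>" "65536 * - \<alpha> \<le> of_int (- 92672)"
    "of_int 131056 \<le> 65536 * \<gamma>" "65536 * \<gamma> \<le> of_int 131088"
    using assms(2) unfolding param_box_def by simp_all
  ultimately have "(65536 * - \<alpha>, 65536 * \<gamma>) \<in> box_union (column_boxes cs)"
    by (rule strip_covered_sound)
  then show ?thesis
    by (simp add: column_set_def param_map_def)
qed

definition cover_columns :: "column list" where
  "cover_columns =
  [(-49, -48, -119, -112, [(-119, -112, -1)]),
   (-48, -47, -113, -108, [(-113, -108, -1)]),
   (-47, -46, -108, -92, [(-108, -92, -1)]),
   (-46, -45, -105, -88, [(-105, -88, -1)]),
   (-45, -44, -102, -80, [(-102, -80, -1)]),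
   (-44, -43, -98, -68, [(-98, -68, -1)]),
   (-43, -42, -93, -64, [(-93, -64, -1)]),
   (-42, -41, -91, -54, [(-91, -54, -1)]),
   (-41, -40, -89, -50, [(-89, -50, -1)]),
   (-40, -39, -91, -40, [(-91, -40, -1)]),
   (-39, -38, -86, -36, [(-86, -36, -1)]),
   (-38, -37, -82, -30, [(-82, -30, -1)]),
   (-37, -36, -80, -24, [(-80, -24, -1)]),
   (-36, -35, -79, -20, [(-79, -20, -1)]),
   (-35, -34, -89, -11, [(-89, -11, -1)]),
   (-34, -33, -86, -8, [(-86, -8, -1)]),
   (-33, -32, -83, -4, [(-83, -4, -1)]),
   (-32, -31, -79, 2, [(-79, 2, -1)]),
   (-31, -30, -75, 4, [(-75, 4, -1)]),
   (-30, -29, -74, 9, [(-74, 9, -1)]),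
   (-29, -28, -75, 13, [(-75, 13, -1)]),
   (-28, -27, -98, 19, [(-98, -68, 0), (-71, 19, -1)]),
   (-27, -26, -93, 23, [(-93, -64, 0), (-67, 23, -1)]),
   (-26, -25, -91, 26, [(-91, -54, 0), (-65, 26, -1)]),
   (-25, -24, -89, 29, [(-89, -50, 0), (-64, 29, -1)]),
   (-24, -23, -91, 33, [(-91, -40, 0), (-74, 33, -1)]),
   (-23, -22, -86, 40, [(-86, -36, 0), (-71, 40, -1)]),
   (-22, -21, -82, 36, [(-82, -30, 0), (-69, 36, -1)]),
   (-21, -20, -80, 38, [(-80, -24, 0), (-63, 38, -1)]),
   (-20, -19, -79, 41, [(-79, -20, 0), (-60, 41, -1)]),
   (-19, -18, -89, 45, [(-89, -11, 0), (-58, 45, -1)]),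
   (-18, -17, -86, 49, [(-86, -8, 0), (-62, 49, -1)]),
   (-17, -16, -83, 51, [(-83, -4, 0), (-55, 51, -1)]),
   (-16, -15, -79, 55, [(-79, 2, 0), (-51, 55, -1)]),
   (-15, -14, -75, 62, [(-75, 4, 0), (-49, 62, -1)]),
   (-14, -13, -74, 58, [(-74, 9, 0), (-45, 58, -1)]),
   (-13, -12, -75, 60, [(-75, 13, 0), (-41, 60, -1)]),
   (-12, -11, -98, 63, [(-98, -68, 1), (-71, 19, 0), (-38, 63, -1)]),
   (-11, -10, -93, 69, [(-93, -64, 1), (-67, 23, 0), (-36, 69, -1)]),
   (-10, -9, -91, 71, [(-91, -54, 1), (-65, 26, 0), (-40, 71, -1)]),
   (-9, -8, -89, 74, [(-89, -50, 1), (-64, 29, 0), (-33, 74, -1)]),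
   (-8, -7, -91, 64, [(-91, -40, 1), (-74, 33, 0), (-29, 64, -1)]),
   (-7, -6, -86, 65, [(-86, -36, 1), (-71, 40, 0), (-26, 65, -1)]),
   (-6, -5, -82, 67, [(-82, -30, 1), (-69, 36, 0), (-23, 67, -1)]),
   (-5, -4, -80, 71, [(-80, -24, 1), (-63, 38, 0), (-19, 71, -1)]),
   (-4, -3, -79, 75, [(-79, -20, 1), (-60, 41, 0), (-13, 75, -1)]),
   (-3, -2, -89, 74, [(-89, -11, 1), (-58, 45, 0), (-9, 74, -1)]),
   (-2, -1, -86, 75, [(-86, -8, 1), (-62, 49, 0), (-4, 75, -1)]),
   (-1, 0, -83, 79, [(-83, -4, 1), (-55, 51, 0), (-2, 79, -1)]),
   (0, 1, -79, 83, [(-79, 2, 1), (-51, 55, 0), (4, 83, -1)]),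
   (1, 2, -75, 86, [(-75, 4, 1), (-49, 62, 0), (8, 86, -1)]),
   (2, 3, -74, 89, [(-74, 9, 1), (-45, 58, 0), (11, 89, -1)]),
   (3, 4, -75, 79, [(-75, 13, 1), (-41, 60, 0), (20, 79, -1)]),
   (4, 5, -71, 80, [(-71, 19, 1), (-38, 63, 0), (24, 80, -1)]),
   (5, 6, -67, 82, [(-67, 23, 1), (-36, 69, 0), (30, 82, -1)]),
   (6, 7, -65, 86, [(-65, 26, 1), (-40, 71, 0), (36, 86, -1)]),
   (7, 8, -64, 91, [(-64, 29, 1), (-33, 74, 0), (40, 91, -1)]),
   (8, 9, -74, 89, [(-74, 33, 1), (-29, 64, 0), (50, 89, -1)]),
   (9, 10, -71, 91, [(-71, 40, 1), (-26, 65, 0), (54, 91, -1)]),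
   (10, 11, -69, 93, [(-69, 36, 1), (-23, 67, 0), (64, 93, -1)]),
   (11, 12, -63, 98, [(-63, 38, 1), (-19, 71, 0), (68, 98, -1)]),
   (12, 13, -60, 75, [(-60, 41, 1), (-13, 75, 0)]),
   (13, 14, -58, 74, [(-58, 45, 1), (-9, 74, 0)]),
   (14, 15, -62, 75, [(-62, 49, 1), (-4, 75, 0)]),
   (15, 16, -55, 79, [(-55, 51, 1), (-2, 79, 0)]),
   (16, 17, -51, 83, [(-51, 55, 1), (4, 83, 0)]),
   (17, 18, -49, 86, [(-49, 62, 1), (8, 86, 0)]),
   (18, 19, -45, 89, [(-45, 58, 1), (11, 89, 0)]),
   (19, 20, -41, 79, [(-41, 60, 1), (20, 79, 0)]),
   (20, 21, -38, 80, [(-38, 63, 1), (24, 80, 0)]),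
   (21, 22, -36, 82, [(-36, 69, 1), (30, 82, 0)]),
   (22, 23, -40, 86, [(-40, 71, 1), (36, 86, 0)]),
   (23, 24, -33, 91, [(-33, 74, 1), (40, 91, 0)]),
   (24, 25, -29, 89, [(-29, 64, 1), (50, 89, 0)]),
   (25, 26, -26, 91, [(-26, 65, 1), (54, 91, 0)]),
   (26, 27, -23, 93, [(-23, 67, 1), (64, 93, 0)]),
   (27, 28, -19, 98, [(-19, 71, 1), (68, 98, 0)]),
   (28, 29, -13, 75, [(-13, 75, 1)]),
   (29, 30, -9, 74, [(-9, 74, 1)]),
   (30, 31, -4, 75, [(-4, 75, 1)]),
   (31, 32, -2, 79, [(-2, 79, 1)]),
   (32, 33, 4, 83, [(4, 83, 1)]),
   (33, 34, 8, 86, [(8, 86, 1)]),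
   (34, 35, 11, 89, [(11, 89, 1)]),
   (35, 36, 20, 79, [(20, 79, 1)]),
   (36, 37, 24, 80, [(24, 80, 1)]),
   (37, 38, 30, 82, [(30, 82, 1)]),
   (38, 39, 36, 86, [(36, 86, 1)]),
   (39, 40, 40, 91, [(40, 91, 1)]),
   (40, 41, 50, 89, [(50, 89, 1)]),
   (41, 42, 54, 91, [(54, 91, 1)]),
   (42, 43, 64, 93, [(64, 93, 1)]),
   (43, 44, 68, 98, [(68, 98, 1)]),
   (44, 45, 80, 102, [(80, 102, 1)]),
   (45, 46, 88, 105, [(88, 105, 1)]),
   (46, 47, 92, 108, [(92, 108, 1)]),
   (47, 48, 108, 113, [(108, 113, 1)]),
   (48, 49, 112, 119, [(112, 119, 1)])]"

lemma certificate_ok_cover_columns: "certificate_ok cover_columns"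
  by code_simp

section \<open>Zeros near 1/sqrt 2\<close>

lemma certified_zero_expansion:
  fixes T :: "real \<times> real \<Rightarrow> real \<times> real"
  assumes "linear T" "param_box \<alpha> \<beta> \<gamma> \<delta>" "\<And>v. T (param_map \<alpha> \<beta> \<gamma> \<delta> v) = v"
    and "\<And>v. (\<lambda>n. (T ^^ n) v) \<longlonglongrightarrow> 0"
  shows "\<exists>a\<in>coeffsB. (\<lambda>n. of_int (a n) *\<^sub>R (T ^^ n) (1, 0)) sums 0"
  using certificate_ok_self_cover[OF certificate_ok_cover_columns assms(2)]
  by (rule self_cover_zero_expansion[OF assms(1,3,4) bounded_column_set _
        certificate_ok_target[OF certificate_ok_cover_columns assms(2)]])

definition window :: "real set" where
  "window = {70707/100000..70714/100000}"

lemma window_mult: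
  assumes "g \<in> window" "l \<in> window"
  shows "(70707/100000) * (70707/100000) \<le> g * l" "g * l \<le> (70714/100000) * (70714/100000)"
proof -
  have "70707/100000 \<le> g" "g \<le> 70714/100000" "70707/100000 \<le> l" "l \<le> 70714/100000"
    using assms by (simp_all add: window_def)
  then show "(70707/100000) * (70707/100000) \<le> g * l" "g * l \<le> (70714/100000) * (70714/100000)"
    by (intro mult_mono; linarith)+
qed

lemma param_box_tri:
  assumes "g \<in> window" "l \<in> window"
  shows "param_box (1/g) 0 (1/(g*l)) (1/l)"
proof -
  note window_mult[OF assms]
  moreover have "0 < g" "0 < l" "0 < g * l"
    using assms by (auto simp: window_def)
  ultimately show ?thesis
    using assms by (simp add: param_box_def window_def field_simps)
qed

lemma tri_map_param_map:
  "g \<noteq> 0 \<Longrightarrow> l \<noteq> 0 \<Longrightarrow> tri_map g l (param_map (1/g) 0 (1/(g*l)) (1/l) v) = v"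
  by (cases v) (simp add: tri_map_def param_map_def field_simps)

lemma window_tri_zero_expansion:
  assumes "g \<in> window" "l \<in> window"
  shows "\<exists>a\<in>coeffsB. (\<lambda>n. of_int (a n) *\<^sub>R (tri_map g l ^^ n) (1, 0)) sums 0"
proof (rule certified_zero_expansion[OF linear_tri_map param_box_tri[OF assms]])
  have "0 < g" "g < 1" "0 < l" "l < 1"
    using assms by (auto simp: window_def)
  then show "tri_map g l (param_map (1/g) 0 (1/(g*l)) (1/l) v) = v"
    and "(\<lambda>n. (tri_map g l ^^ n) v) \<longlonglongrightarrow> 0" for v
    by (simp_all add: tri_map_param_map tri_map_iterates_tendsto_zero)
qed

lemma window_common_zero:
  assumes "g \<in> window" "l \<in> window"
  shows "\<exists>a\<in>coeffsB. bser a g = 0 \<and> bser a l = 0"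
  using window_tri_zero_expansion[OF assms] tri_expansion_zeros by blast

lemma window_double_zero:
  assumes "l \<in> window"
  shows "\<exists>a\<in>coeffsB. bser a l = 0 \<and> deriv (bser a) l = 0"
proof -
  obtain a where a: "a \<in> coeffsB" "(\<lambda>n. of_int (a n) *\<^sub>R (tri_map l l ^^ n) (1, 0)) sums 0"
    using window_tri_zero_expansion[OF assms assms] by blast
  moreover have "\<bar>l\<bar> < 1"
    using assms by (auto simp: window_def)
  ultimately show ?thesis
    using tri_expansion_zeros(1) tri_expansion_deriv_zero by blast
qed

lemma param_box_rot:
  assumes "s \<in> window" "t\<^sup>2 \<le> 1/10^10"
  shows "param_box (s / (s\<^sup>2 + t\<^sup>2)) (t\<^sup>2 / (s\<^sup>2 + t\<^sup>2)) (1 / (s\<^sup>2 + t\<^sup>2)) (s / (s\<^sup>2 + t\<^sup>2))"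
proof -
  define D where "D = s\<^sup>2 + t\<^sup>2"
  have s: "70707/100000 \<le> s" "s \<le> 70714/100000"
    using assms(1) by (auto simp: window_def)
  have sq: "(70707/100000) * s \<le> s\<^sup>2" "s\<^sup>2 \<le> (70714/100000) * s"
      "(70707/100000) * (70707/100000) \<le> s\<^sup>2" "s\<^sup>2 \<le> (70714/100000) * (70714/100000)"
    using s window_mult[OF assms(1,1)] by (simp_all add: power2_eq_square mult_right_mono)
  have t: "0 \<le> t\<^sup>2" "t\<^sup>2 \<le> 1/10000000000"
    using assms(2) by simp_all
  have "0 < D" "5792 * D \<le> 4096 * s" "4096 * s \<le> 5793 * D"
    "8191 * D \<le> 4096" "4096 \<le> 8193 * D" "524288 * t\<^sup>2 \<le> D"
    unfolding D_def by (use sq s t in argo)+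
  then show ?thesis
    unfolding D_def[symmetric] by (simp add: param_box_def field_simps)
qed

lemma rot_map_param_map:
  assumes "s\<^sup>2 + t\<^sup>2 \<noteq> 0"
  shows "rot_map s t
    (param_map (s / (s\<^sup>2 + t\<^sup>2)) (t\<^sup>2 / (s\<^sup>2 + t\<^sup>2)) (1 / (s\<^sup>2 + t\<^sup>2)) (s / (s\<^sup>2 + t\<^sup>2)) v) = v"
proof -
  define k where "k = 1 / (s\<^sup>2 + t\<^sup>2)"
  have k: "x / (s\<^sup>2 + t\<^sup>2) = x * k" "k * (s\<^sup>2 + t\<^sup>2) = 1" for x
    using assms by (simp_all add: k_def)
  obtain w u where v: "v = (w, u)"
    by fastforce
  have "s * (s * k * w + t\<^sup>2 * k * u) - t\<^sup>2 * (s * k * u - k * w) = k * (s\<^sup>2 + t\<^sup>2) * w"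
    "s * k * w + t\<^sup>2 * k * u + s * (s * k * u - k * w) = k * (s\<^sup>2 + t\<^sup>2) * u"
    by (simp_all add: algebra_simps power2_eq_square)
  then show ?thesis
    by (simp add: v k rot_map_def param_map_def mult.commute)
qed

lemma window_complex_zero:
  assumes "s \<in> window" "t\<^sup>2 \<le> 1/10^10"
  shows "\<exists>a\<in>coeffsB. bser a (Complex s t) = 0"
proof -
  have "0 < s\<^sup>2" "s\<^sup>2 + t\<^sup>2 < 1"
    using assms window_mult[OF assms(1,1)] by (auto simp: window_def power2_eq_square)
  then have "s\<^sup>2 + t\<^sup>2 \<noteq> 0"
    by (metis add_pos_nonneg zero_le_power2 less_irrefl)
  then show ?thesis
    using certified_zero_expansion[OF linear_rot_map param_box_rot[OF assms] rot_map_param_map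
        rot_map_iterates_tendsto_zero[OF \<open>s\<^sup>2 + t\<^sup>2 < 1\<close>]] rot_expansion_zero
    by blast
qed

lemma near_isqrt2_in_window:
  assumes "\<bar>x - 1 / sqrt 2\<bar> < 4/1000000"
  shows "x \<in> window"
proof -
  define r where "r = 1 / sqrt 2"
  have "14142135/10000000 < sqrt 2"
    by (rule real_less_rsqrt) (simp add: power2_eq_square)
  moreover have "sqrt 2 < 14142136/10000000"
    by (rule real_less_lsqrt) (simp_all add: power2_eq_square)
  moreover have "r = sqrt 2 / 2"
    by (simp add: r_def field_simps)
  ultimately have "70710675/100000000 < r" "r < 70710680/100000000"
    by simp_all
  then show ?thesis
    using assms unfolding window_def atLeastAtMost_iff abs_less_iff r_def[symmetric] by argo
qed

lemma complex_near_isqrt2_in_window: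
  assumes "norm (z - complex_of_real (1 / sqrt 2)) < 3/1000000"
  shows "Re z \<in> window" "(Im z)\<^sup>2 \<le> 1/10^10"
proof -
  have "\<bar>Re z - 1 / sqrt 2\<bar> < 3/1000000" "\<bar>Im z\<bar> < 3/1000000"
    using assms abs_Re_le_cmod[of "z - complex_of_real (1 / sqrt 2)"]
      abs_Im_le_cmod[of "z - complex_of_real (1 / sqrt 2)"] by auto
  then show "Re z \<in> window"
    by (intro near_isqrt2_in_window) simp
  have "(Im z)\<^sup>2 \<le> (3/1000000)\<^sup>2"
    unfolding abs_le_square_iff[symmetric] using \<open>\<bar>Im z\<bar> < 3/1000000\<close> by simp
  then show "(Im z)\<^sup>2 \<le> 1/10^10"
    by (rule order_trans) (simp add: power2_eq_square)
qed

theorem theorem2p10: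
  fixes \<eta> :: real
  assumes "\<eta> = 4 * 10 powr (-6)"
  shows "{(g, l). g \<in> {0<..<1} \<and> l \<in> {0<..<1} \<and>
            \<bar>g - 1 / sqrt 2\<bar> < \<eta> \<and> \<bar>l - 1 / sqrt 2\<bar> < \<eta>} \<subseteq> setN \<and>
         {z. norm z < 1 \<and> norm (z - complex_of_real (1 / sqrt 2)) < 3 * \<eta> / 4} \<subseteq> setM \<and>
         {l. l \<in> {0<..<1} \<and> \<bar>l - 1 / sqrt 2\<bar> < \<eta>} \<subseteq> setO"
proof -
  have \<eta>: "\<eta> = 4/1000000"
    using assms by (simp add: powr_minus powr_numeral)
  show ?thesis
  proof (intro conjI subsetI)
    fix gl assume "gl \<in> {(g, l). g \<in> {0<..<1} \<and> l \<in> {0<..<1} \<and>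
        \<bar>g - 1 / sqrt 2\<bar> < \<eta> \<and> \<bar>l - 1 / sqrt 2\<bar> < \<eta>}"
    then show "gl \<in> setN"
      using window_common_zero near_isqrt2_in_window \<eta> by (auto simp: setN_def)
  next
    fix z assume z: "z \<in> {z. norm z < 1 \<and> norm (z - complex_of_real (1 / sqrt 2)) < 3 * \<eta> / 4}"
    then have "Re z \<in> window" "(Im z)\<^sup>2 \<le> 1/10^10"
      using complex_near_isqrt2_in_window \<eta> by auto
    then show "z \<in> setM"
      using z window_complex_zero[of "Re z" "Im z"] by (auto simp: setM_def)
  next
    fix l assume "l \<in> {l. l \<in> {0<..<1} \<and> \<bar>l - 1 / sqrt 2\<bar> < \<eta>}"
    then show "l \<in> setO"
      using window_double_zero near_isqrt2_in_window \<eta> by (auto simp: setO_def)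
  qed
qed

end
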